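(* Let $G$ be an abelian group, $\phi\in\mathcal{P}^{\mathbb{H}}_*(G)$, and let $\mu$ be a nonnegative Radon measure on $G^\delta$ with $\phi(g)=\int_{G^\delta}\gamma(g)\,d\mu(\gamma)$ for all $g\in G$. Then $\mu$ is the unique nonnegative Radon measure with this property if and only if every nonzero $\nu\in\mathcal{K}(G^\delta)$ satisfies one of the following: (i) $\nu^-_2\neq0$; (ii) $\nu^-_2=0$ and the Radon–Nikodym derivative $d\nu^-_1/d\mu$ is not $\mu$-essentially bounded, where $\nu^-$ is the negative (lower) variation of $\nu$ and $\nu^-=\nu^-_1+\nu^-_2$ is its Lebesgue decomposition into a part $\nu^-_1$ absolutely continuous and a part $\nu^-_2$ singular with respect to $\mu$.
   Context: $\mathbb{H}$ is the real quaternion algebra, $\mathbb{S}=\{q\in\mathbb{H}:|q|=1\}$. For an abelian group $G$, $\phi:G\to\mathbb{H}$ is positive definite if for all $k$, $g_i\in G$, $q_i\in\mathbb{H}$, $\sum_{i,j=1}^k\overline{q_i}\,\phi(g_j-g_i)\,q_j$ is a nonnegative real number; $\mathcal{P}^{\mathbb{H}}_*(G)$ is the set of such $\phi$ with $\phi(0)=1$. $G^\delta=\mathrm{Hom}(G,\mathbb{S})$ with the topology of pointwise convergence (a compact Hausdorff space). $\mathcal{M}(G^\delta)$ is the space of finite signed real Radon measures on $G^\delta$, and $\mathcal{K}(G^\delta)=\{\nu\in\mathcal{M}(G^\delta):\int_{G^\delta}\gamma(g)\,d\nu(\gamma)=0\text{ for all }g\in G\}$. *)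

theory Defs
  imports "HOL-Analysis.Analysis"
begin

text \<open>A quaternion a + b i + c j + d k is represented by the 4-tuple (a,b,c,d) of reals.
  Addition, the (Euclidean) norm and the topology are the ones of the product type;
  the Hamilton product and the conjugation are defined explicitly.\<close>

type_synonym quat = "real \<times> real \<times> real \<times> real"

fun qmult :: "quat \<Rightarrow> quat \<Rightarrow> quat" where
  "qmult (a1, b1, c1, d1) (a2, b2, c2, d2) =
     (a1*a2 - b1*b2 - c1*c2 - d1*d2,
      a1*b2 + b1*a2 + c1*d2 - d1*c2,
      a1*c2 - b1*d2 + c1*a2 + d1*b2,
      a1*d2 + b1*c2 - c1*b2 + d1*a2)"

fun qconj :: "quat \<Rightarrow> quat" where
  "qconj (a, b, c, d) = (a, -b, -c, -d)"

definition qreal :: "real \<Rightarrow> quat" where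
  "qreal r = (r, 0, 0, 0)"

definition qsphere :: "quat set" where
  "qsphere = {q. norm q = 1}"

definition qpos_def :: "('g::ab_group_add \<Rightarrow> quat) \<Rightarrow> bool" where
  "qpos_def \<phi> \<longleftrightarrow>
     (\<forall>(k::nat) (g::nat \<Rightarrow> 'g) (q::nat \<Rightarrow> quat).
        \<exists>r::real. r \<ge> 0 \<and>
          (\<Sum>i<k. \<Sum>j<k. qmult (qmult (qconj (q i)) (\<phi> (g j - g i))) (q j)) = qreal r)"

definition P_star_H :: "('g::ab_group_add \<Rightarrow> quat) set" where
  "P_star_H = {\<phi>. qpos_def \<phi> \<and> \<phi> 0 = qreal 1}"

definition Gdelta :: "('g::ab_group_add \<Rightarrow> quat) set" where
  "Gdelta = {\<gamma>. (\<forall>g. \<gamma> g \<in> qsphere) \<and> (\<forall>g h. \<gamma> (g + h) = qmult (\<gamma> g) (\<gamma> h))}"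

definition Gdelta_top :: "('g::ab_group_add \<Rightarrow> quat) topology" where
  "Gdelta_top = subtopology (product_topology (\<lambda>_. euclidean) UNIV) Gdelta"

definition borel_of :: "'a topology \<Rightarrow> 'a measure" where
  "borel_of X = sigma (topspace X) {U. openin X U}"

definition radon :: "'a topology \<Rightarrow> 'a measure \<Rightarrow> bool" where
  "radon X M \<longleftrightarrow> sets M = sets (borel_of X) \<and> finite_measure M \<and>
     (\<forall>A\<in>sets M. emeasure M A = (INF U\<in>{U. openin X U \<and> A \<subseteq> U}. emeasure M U)) \<and>
     (\<forall>A\<in>sets M. emeasure M A = (SUP K\<in>{K. compactin X K \<and> K \<subseteq> A}. emeasure M K))"

definition signed_measure :: "'a measure \<Rightarrow> ('a set \<Rightarrow> real) \<Rightarrow> bool" where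
  "signed_measure M \<nu> \<longleftrightarrow> \<nu> {} = 0 \<and>
     (\<forall>A::nat \<Rightarrow> 'a set. range A \<subseteq> sets M \<longrightarrow> disjoint_family A \<longrightarrow>
        (\<lambda>n. \<nu> (A n)) sums \<nu> (\<Union>n. A n))"

definition upper_variation :: "'a measure \<Rightarrow> ('a set \<Rightarrow> real) \<Rightarrow> 'a measure" where
  "upper_variation M \<nu> = measure_of (space M) (sets M)
     (\<lambda>A. SUP B\<in>{B\<in>sets M. B \<subseteq> A}. ennreal (\<nu> B))"

definition lower_variation :: "'a measure \<Rightarrow> ('a set \<Rightarrow> real) \<Rightarrow> 'a measure" where
  "lower_variation M \<nu> = measure_of (space M) (sets M)
     (\<lambda>A. SUP B\<in>{B\<in>sets M. B \<subseteq> A}. ennreal (- \<nu> B))"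

definition signed_radon :: "'a topology \<Rightarrow> ('a set \<Rightarrow> real) \<Rightarrow> bool" where
  "signed_radon X \<nu> \<longleftrightarrow> signed_measure (borel_of X) \<nu> \<and>
     radon X (upper_variation (borel_of X) \<nu>) \<and> radon X (lower_variation (borel_of X) \<nu>)"

definition K_Gdelta :: "(('g::ab_group_add \<Rightarrow> quat) set \<Rightarrow> real) set" where
  "K_Gdelta = {\<nu>. signed_radon Gdelta_top \<nu> \<and>
     (\<forall>g. (\<integral>\<gamma>. \<gamma> g \<partial>(upper_variation (borel_of Gdelta_top) \<nu>))
          - (\<integral>\<gamma>. \<gamma> g \<partial>(lower_variation (borel_of Gdelta_top) \<nu>)) = 0)}"

definition mutually_singular :: "'a measure \<Rightarrow> 'a measure \<Rightarrow> bool" where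
  "mutually_singular M N \<longleftrightarrow>
     (\<exists>S\<in>sets M. emeasure M S = 0 \<and> emeasure N (space M - S) = 0)"

definition lebesgue_decomposition ::
  "'a measure \<Rightarrow> 'a measure \<Rightarrow> 'a measure \<Rightarrow> 'a measure \<Rightarrow> bool" where
  "lebesgue_decomposition M L L1 L2 \<longleftrightarrow>
     sets L1 = sets L \<and> sets L2 = sets L \<and>
     (\<forall>A\<in>sets L. emeasure L A = emeasure L1 A + emeasure L2 A) \<and>
     absolutely_continuous M L1 \<and> mutually_singular M L2"

definition ess_bounded :: "'a measure \<Rightarrow> ('a \<Rightarrow> ennreal) \<Rightarrow> bool" where
  "ess_bounded M f \<longleftrightarrow> (\<exists>C::real. AE x in M. f x \<le> ennreal C)"

end

theory Submission
  imports Defs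
begin

text \<open>If \<mu> is not the only representing measure, the difference \<nu> = \<mu>' - \<mu> of two
  representing measures lies in K(G^delta), is nonzero, and its lower variation is dominated
  by \<mu>; so it is absolutely continuous with Radon-Nikodym derivative at most 1, and violates
  both (i) and (ii). Conversely, if some nonzero \<nu> in K has lower variation r \<mu> with
  0 \<le> r \<le> c, then \<mu> + (\<nu>+ - \<nu>-)/c, where \<nu>+ and \<nu>- are the variations of \<nu>, is a
  nonnegative Radon measure with the same integrals against every character \<gamma> \<mapsto> \<gamma>(g),
  and it differs from \<mu> because \<nu> \<noteq> 0.\<close>

section \<open>Sums of measures\<close>

definition plus_measure :: "'a measure \<Rightarrow> 'a measure \<Rightarrow> 'a measure" where
  "plus_measure M N = measure_of (space M) (sets M) (\<lambda>A. emeasure M A + emeasure N A)"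

lemma
  shows sets_plus_measure[simp, measurable_cong]: "sets (plus_measure M N) = sets M"
    and space_plus_measure[simp]: "space (plus_measure M N) = space M"
  by (simp_all add: plus_measure_def)

lemma emeasure_plus_measure:
  assumes "sets N = sets M"
  shows "emeasure (plus_measure M N) A = emeasure M A + emeasure N A"
proof (cases "A \<in> sets M")
  case True
  show ?thesis unfolding plus_measure_def
  proof (rule emeasure_measure_of_sigma)
    show "sigma_algebra (space M) (sets M)" ..
    show "positive (sets M) (\<lambda>A. emeasure M A + emeasure N A)" by (simp add: positive_def)
    show "countably_additive (sets M) (\<lambda>A. emeasure M A + emeasure N A)"
    proof (rule countably_additiveI)
      fix A :: "nat \<Rightarrow> _" assume "range A \<subseteq> sets M" "disjoint_family A"
      then show "(\<Sum>i. emeasure M (A i) + emeasure N (A i)) =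
          emeasure M (\<Union>i. A i) + emeasure N (\<Union>i. A i)"
        using assms by (simp add: suminf_add[symmetric] suminf_emeasure)
    qed
  qed (fact True)
next
  case False
  then show ?thesis using assms by (simp add: emeasure_notin_sets)
qed

lemma finite_measure_plus_measure:
  assumes "sets N = sets M" "finite_measure M" "finite_measure N"
  shows "finite_measure (plus_measure M N)"
  using assms by (intro finite_measureI)
    (simp add: emeasure_plus_measure finite_measure.emeasure_finite)

lemma nn_integral_plus_measure:
  assumes N: "sets N = sets M" and f: "f \<in> borel_measurable M"
  shows "(\<integral>\<^sup>+x. f x \<partial>plus_measure M N) = (\<integral>\<^sup>+x. f x \<partial>M) + (\<integral>\<^sup>+x. f x \<partial>N)"
  using f
proof (induct rule: borel_measurable_induct)
  case (cong f g)
  have "space N = space M" using N by (rule sets_eq_imp_space_eq)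
  then have "(\<integral>\<^sup>+x. f x \<partial>K) = (\<integral>\<^sup>+x. g x \<partial>K)" if "K \<in> {M, N, plus_measure M N}" for K
    using cong that by (intro nn_integral_cong) auto
  with cong show ?case by simp
next
  case (set A)
  then show ?case using N by (simp add: emeasure_plus_measure)
next
  case (mult u c)
  have [measurable]: "u \<in> borel_measurable N" using mult N by (simp cong: measurable_cong_sets)
  show ?case using mult by (simp add: nn_integral_cmult distrib_left)
next
  case (add u v)
  have [measurable]: "u \<in> borel_measurable N" "v \<in> borel_measurable N"
    using add N by (simp_all cong: measurable_cong_sets)
  show ?case using add by (simp add: nn_integral_add add_ac)
next
  case (seq U)
  have [measurable]: "\<And>i. U i \<in> borel_measurable N" "\<And>i. U i \<in> borel_measurable (plus_measure M N)"
    using seq N by (simp_all cong: measurable_cong_sets)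
  have "(\<integral>\<^sup>+x. (SUP i. U i x) \<partial>plus_measure M N) = (SUP i. \<integral>\<^sup>+x. U i x \<partial>plus_measure M N)"
    using seq by (intro nn_integral_monotone_convergence_SUP) auto
  also have "\<dots> = (SUP i. (\<integral>\<^sup>+x. U i x \<partial>M) + (\<integral>\<^sup>+x. U i x \<partial>N))"
    using seq by simp
  also have "\<dots> = (SUP i. \<integral>\<^sup>+x. U i x \<partial>M) + (SUP i. \<integral>\<^sup>+x. U i x \<partial>N)"
    by (rule ennreal_SUP_add) (use seq in \<open>auto intro!: incseq_nn_integral\<close>)
  also have "\<dots> = (\<integral>\<^sup>+x. (SUP i. U i x) \<partial>M) + (\<integral>\<^sup>+x. (SUP i. U i x) \<partial>N)"
    using seq by (simp add: nn_integral_monotone_convergence_SUP)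
  finally show ?case by (simp add: image_comp)
qed

lemma integrable_plus_measureD:
  fixes f :: "'a \<Rightarrow> 'b::{banach, second_countable_topology}"
  assumes N: "sets N = sets M" and f: "integrable (plus_measure M N) f"
  shows "integrable M f" "integrable N f"
proof -
  have [measurable]: "f \<in> borel_measurable M" "f \<in> borel_measurable N"
    using f N by (simp_all cong: measurable_cong_sets)
  have "(\<integral>\<^sup>+x. norm (f x) \<partial>M) + (\<integral>\<^sup>+x. norm (f x) \<partial>N) < \<infinity>"
    using f N by (simp add: integrable_iff_bounded nn_integral_plus_measure)
  then show "integrable M f" "integrable N f"
    by (auto simp: integrable_iff_bounded top_unique)
qed

lemma integral_plus_measure:
  fixes f :: "'a \<Rightarrow> 'b::{banach, second_countable_topology}"
  assumes N: "sets N = sets M" and f: "integrable (plus_measure M N) f"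
  shows "integral\<^sup>L (plus_measure M N) f = integral\<^sup>L M f + integral\<^sup>L N f"
  using f
proof (induct rule: integrable_induct)
  case (base A c)
  have "emeasure M A < \<infinity>" "emeasure N A < \<infinity>"
    using base N by (auto simp: emeasure_plus_measure top_unique)
  then show ?case
    using base N by (simp add: emeasure_plus_measure measure_def enn2real_plus scaleR_add_left)
next
  case (add f g)
  then have "integrable M f" "integrable N f" "integrable M g" "integrable N g"
    using integrable_plus_measureD[OF N] by auto
  with add show ?case by (simp add: integral_add)
next
  case (lim f s)
  have sp: "space N = space M" using N by (rule sets_eq_imp_space_eq)
  have int: "integrable M f" "integrable N f" "\<And>i. integrable M (s i)" "\<And>i. integrable N (s i)"
    using lim integrable_plus_measureD[OF N] by blast+
  have L: "(\<lambda>i. integral\<^sup>L K (s i)) \<longlonglongrightarrow> integral\<^sup>L K f" if "K \<in> {M, N, plus_measure M N}" for K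
  proof (rule integral_dominated_convergence[where w="\<lambda>x. 2 * norm (f x)"])
    have "integrable K f" "\<And>i. integrable K (s i)"
      using that lim int by auto
    then show "f \<in> borel_measurable K" "\<And>i. s i \<in> borel_measurable K"
      "integrable K (\<lambda>x. 2 * norm (f x))" by auto
    show "AE x in K. (\<lambda>i. s i x) \<longlonglongrightarrow> f x" "\<And>i. AE x in K. norm (s i x) \<le> 2 * norm (f x)"
      using lim that sp by auto
  qed
  have "(\<lambda>i. integral\<^sup>L (plus_measure M N) (s i)) \<longlonglongrightarrow> integral\<^sup>L M f + integral\<^sup>L N f"
    using lim by (simp add: tendsto_add L)
  then show ?case using L[of "plus_measure M N"] by (auto intro: LIMSEQ_unique)
qed

lemma finite_measure_dominated:
  assumes "finite_measure M1" "finite_measure M2" "sets N = sets M1"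
    and "emeasure N (space N) \<le> emeasure M1 (space N) + emeasure M2 (space N)"
  shows "finite_measure N"
proof (rule finite_measureI)
  have "emeasure M1 (space N) + emeasure M2 (space N) \<noteq> top"
    using assms(1,2) by (simp add: finite_measure.emeasure_finite)
  then show "emeasure N (space N) \<noteq> \<infinity>"
    using assms(4) neq_top_trans by (metis infinity_ennreal_def)
qed

lemma absolutely_continuous_if_dominated:
  assumes "sets N = sets M" and "\<And>E. E \<in> sets M \<Longrightarrow> emeasure N E \<le> emeasure M E"
  shows "absolutely_continuous M N"
  unfolding absolutely_continuous_def
proof
  fix E assume "E \<in> null_sets M"
  then show "E \<in> null_sets N" using assms by (auto simp: null_sets_def dest: order.trans[OF assms(2)])
qed

lemma AE_RN_deriv_le_1:
  assumes fM: "finite_measure M" and sN: "sets N = sets M"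
    and dom: "\<And>E. E \<in> sets M \<Longrightarrow> emeasure N E \<le> emeasure M E"
  shows "AE x in M. RN_deriv M N x \<le> 1"
proof -
  interpret finite_measure M by fact
  have "absolutely_continuous M N" using sN dom by (rule absolutely_continuous_if_dominated)
  then have dens: "density M (RN_deriv M N) = N" using sN by (rule density_RN_deriv)
  define A where "A = {x \<in> space M. 1 < RN_deriv M N x}"
  have A[measurable]: "A \<in> sets M" unfolding A_def by measurable
  have "(\<integral>\<^sup>+x. RN_deriv M N x * indicator A x \<partial>M) = emeasure N A"
    using A by (subst dens[symmetric]) (simp add: emeasure_density)
  also have "\<dots> \<le> (\<integral>\<^sup>+x. indicator A x \<partial>M)" using A dom by simp
  finally have le: "(\<integral>\<^sup>+x. RN_deriv M N x * indicator A x \<partial>M) \<le> (\<integral>\<^sup>+x. indicator A x \<partial>M)" .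
  have ge: "AE x in M. indicator A x \<le> RN_deriv M N x * (indicator A x :: ennreal)"
    by (intro AE_I2) (auto simp: A_def indicator_def less_imp_le)
  have fin: "(\<integral>\<^sup>+x. indicator A x \<partial>M) \<noteq> \<infinity>" using A by (simp add: emeasure_eq_measure)
  have "AE x in M. RN_deriv M N x * indicator A x \<le> (indicator A x :: ennreal)"
  proof (rule ccontr)
    assume not: "\<not> (AE x in M. RN_deriv M N x * indicator A x \<le> (indicator A x :: ennreal))"
    have "(\<integral>\<^sup>+x. indicator A x \<partial>M) < (\<integral>\<^sup>+x. RN_deriv M N x * indicator A x \<partial>M)"
      by (rule nn_integral_less[OF _ _ fin ge not]; measurable)
    with le show False by simp
  qed
  then show ?thesis
    by (rule AE_mp) (intro AE_I2 impI, auto simp: A_def indicator_def of_bool_def not_less split: if_splits)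
qed

lemma lebesgue_decomposition_trivial:
  "absolutely_continuous M L \<Longrightarrow> lebesgue_decomposition M L L (null_measure L)"
  unfolding lebesgue_decomposition_def mutually_singular_def by (auto intro!: bexI[of _ "{}"])

lemma lebesgue_decomposition_singular_part_null:
  assumes "lebesgue_decomposition M L L1 L2" "\<forall>A\<in>sets L2. emeasure L2 A = 0"
  shows "L1 = L"
  using assms by (intro measure_eqI) (auto simp: lebesgue_decomposition_def)

lemma finite_measure_eqI:
  assumes "finite_measure M" "finite_measure N" "sets M = sets N"
    and "\<And>A. A \<in> sets M \<Longrightarrow> measure M A = measure N A"
  shows "M = N"
  using assms by (intro measure_eqI) (simp_all add: finite_measure.emeasure_eq_measure)

section \<open>Variations of a signed measure\<close>

text \<open>\<open>upper_variation M \<nu>\<close> is \<open>measure_of\<close> applied to this set function, so its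
  measure only agrees with it once countable additivity is established
  (\<open>emeasure_upper_variation\<close>).\<close>

definition upper_variation_fun :: "'a measure \<Rightarrow> ('a set \<Rightarrow> real) \<Rightarrow> 'a set \<Rightarrow> ennreal" where
  "upper_variation_fun M \<nu> A = (SUP B\<in>{B\<in>sets M. B \<subseteq> A}. ennreal (\<nu> B))"

lemma lower_variation_eq_upper_variation_uminus:
  "lower_variation M \<nu> = upper_variation M (\<lambda>A. - \<nu> A)"
  by (simp add: lower_variation_def upper_variation_def)

lemma
  shows sets_upper_variation[simp]: "sets (upper_variation M \<nu>) = sets M"
    and space_upper_variation[simp]: "space (upper_variation M \<nu>) = space M"
    and sets_lower_variation[simp]: "sets (lower_variation M \<nu>) = sets M"
    and space_lower_variation[simp]: "space (lower_variation M \<nu>) = space M"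
  by (simp_all add: upper_variation_def lower_variation_def)

lemma signed_measure_uminus: "signed_measure M \<nu> \<Longrightarrow> signed_measure M (\<lambda>A. - \<nu> A)"
  unfolding signed_measure_def by (simp add: sums_minus)

lemma signed_measure_Un:
  assumes "signed_measure M \<nu>" "A \<in> sets M" "B \<in> sets M" "A \<inter> B = {}"
  shows "\<nu> (A \<union> B) = \<nu> A + \<nu> B"
proof -
  define F where "F n = (if n = 0 then A else if n = Suc 0 then B else {})" for n :: nat
  have "range F \<subseteq> sets M" "disjoint_family F" "(\<Union>n. F n) = A \<union> B"
    using assms by (auto simp: F_def disjoint_family_on_def split: if_splits)
  then have "(\<lambda>n. \<nu> (F n)) sums \<nu> (A \<union> B)"
    using assms(1) unfolding signed_measure_def by metis
  moreover have "(\<lambda>n. \<nu> (F n)) sums (\<Sum>n\<in>{0, Suc 0}. \<nu> (F n))"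
    by (rule sums_finite) (use assms(1) in \<open>auto simp: F_def signed_measure_def\<close>)
  ultimately show ?thesis by (simp add: sums_unique2 F_def)
qed

lemma signed_measure_Diff:
  assumes "signed_measure M \<nu>" "A \<in> sets M" "B \<in> sets M" "B \<subseteq> A"
  shows "\<nu> (A - B) = \<nu> A - \<nu> B"
proof -
  have "\<nu> ((A - B) \<union> B) = \<nu> (A - B) + \<nu> B" using assms by (intro signed_measure_Un) auto
  moreover have "(A - B) \<union> B = A" using assms by auto
  ultimately show ?thesis by simp
qed

lemma ennreal_add_le_add: "ennreal (x + y) \<le> ennreal x + ennreal y"
  by (metis add_increasing add_increasing2 add_le_same_cancel1 add_le_same_cancel2
      ennreal_leI ennreal_plus linorder_le_cases zero_le)

lemma ennreal_le_suminf_of_sums: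
  assumes "f sums s"
  shows "ennreal s \<le> (\<Sum>n. ennreal (f n))"
proof (rule LIMSEQ_le_const2)
  show "(\<lambda>N. ennreal (\<Sum>n<N. f n)) \<longlonglongrightarrow> ennreal s"
    using assms unfolding sums_def by (rule tendsto_ennrealI)
  have "ennreal (\<Sum>n<N. f n) \<le> (\<Sum>n<N. ennreal (f n))" for N
  proof (induct N)
    case (Suc N)
    have "ennreal (\<Sum>n<Suc N. f n) \<le> ennreal (\<Sum>n<N. f n) + ennreal (f N)"
      using ennreal_add_le_add by simp
    also have "\<dots> \<le> (\<Sum>n<Suc N. ennreal (f n))" using Suc by (simp add: add_right_mono)
    finally show ?case .
  qed simp
  moreover have "(\<Sum>n<N. ennreal (f n)) \<le> (\<Sum>n. ennreal (f n))" for N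
    by (rule sum_le_suminf) auto
  ultimately show "\<exists>N. \<forall>n\<ge>N. ennreal (\<Sum>i<n. f i) \<le> (\<Sum>n. ennreal (f n))"
    using order_trans by blast
qed

lemma upper_variation_fun_mono: "A \<subseteq> A' \<Longrightarrow> upper_variation_fun M \<nu> A \<le> upper_variation_fun M \<nu> A'"
  unfolding upper_variation_fun_def by (rule SUP_subset_mono) auto

lemma upper_variation_fun_upper:
  "B \<in> sets M \<Longrightarrow> B \<subseteq> A \<Longrightarrow> ennreal (\<nu> B) \<le> upper_variation_fun M \<nu> A"
  unfolding upper_variation_fun_def by (rule SUP_upper) auto

lemma upper_variation_fun_empty: "signed_measure M \<nu> \<Longrightarrow> upper_variation_fun M \<nu> {} = 0"
  unfolding upper_variation_fun_def signed_measure_def by simp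

lemma upper_variation_fun_Un_le:
  assumes s: "signed_measure M \<nu>" and A: "A \<in> sets M" and C: "C \<in> sets M" and d: "A \<inter> C = {}"
  shows "upper_variation_fun M \<nu> (A \<union> C) \<le> upper_variation_fun M \<nu> A + upper_variation_fun M \<nu> C"
  unfolding upper_variation_fun_def[of M \<nu> "A \<union> C"]
proof (rule SUP_least)
  fix B assume B: "B \<in> {B \<in> sets M. B \<subseteq> A \<union> C}"
  then have "B = (B \<inter> A) \<union> (B \<inter> C)" by auto
  then have "\<nu> B = \<nu> (B \<inter> A) + \<nu> (B \<inter> C)"
    using signed_measure_Un[OF s, of "B \<inter> A" "B \<inter> C"] A B C d by auto
  then have "ennreal (\<nu> B) \<le> ennreal (\<nu> (B \<inter> A)) + ennreal (\<nu> (B \<inter> C))"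
    using ennreal_add_le_add by simp
  also have "\<dots> \<le> upper_variation_fun M \<nu> A + upper_variation_fun M \<nu> C"
    using B A C by (intro add_mono upper_variation_fun_upper) auto
  finally show "ennreal (\<nu> B) \<le> upper_variation_fun M \<nu> A + upper_variation_fun M \<nu> C" .
qed

lemma ennreal_add_le_upper_variation_fun:
  assumes s: "signed_measure M \<nu>" and B: "B1 \<in> sets M" "B2 \<in> sets M" "B1 \<inter> B2 = {}" "B1 \<union> B2 \<subseteq> D"
  shows "ennreal (\<nu> B1) + ennreal (\<nu> B2) \<le> upper_variation_fun M \<nu> D"
proof (cases "\<nu> B1 \<ge> 0 \<and> \<nu> B2 \<ge> 0")
  case True
  have "\<nu> (B1 \<union> B2) = \<nu> B1 + \<nu> B2" using B s by (intro signed_measure_Un) auto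
  then have "ennreal (\<nu> B1) + ennreal (\<nu> B2) = ennreal (\<nu> (B1 \<union> B2))"
    using True by simp
  also have "\<dots> \<le> upper_variation_fun M \<nu> D"
    using B by (intro upper_variation_fun_upper) auto
  finally show ?thesis .
next
  case False
  then consider "ennreal (\<nu> B1) = 0" | "ennreal (\<nu> B2) = 0" by (auto simp: ennreal_neg)
  then show ?thesis
    using upper_variation_fun_upper[of B1 M D \<nu>] upper_variation_fun_upper[of B2 M D \<nu>] B
    by cases auto
qed

lemma upper_variation_fun_add_le_Un:
  assumes s: "signed_measure M \<nu>" and d: "A \<inter> C = {}"
  shows "upper_variation_fun M \<nu> A + upper_variation_fun M \<nu> C \<le> upper_variation_fun M \<nu> (A \<union> C)"
proof -
  let ?S1 = "{B \<in> sets M. B \<subseteq> A}" and ?S2 = "{B \<in> sets M. B \<subseteq> C}"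
  have ne: "?S1 \<noteq> {}" "?S2 \<noteq> {}" by (auto intro!: exI[of _ "{}"])
  have step: "ennreal (\<nu> B1) + upper_variation_fun M \<nu> C \<le> upper_variation_fun M \<nu> (A \<union> C)"
    if B1: "B1 \<in> ?S1" for B1
  proof -
    have "ennreal (\<nu> B1) + upper_variation_fun M \<nu> C = (SUP B2\<in>?S2. ennreal (\<nu> B1) + ennreal (\<nu> B2))"
      unfolding upper_variation_fun_def[of M \<nu> C] by (rule ennreal_SUP_add_right[OF ne(2)])
    also have "\<dots> \<le> upper_variation_fun M \<nu> (A \<union> C)"
    proof (rule SUP_least)
      fix B2 assume "B2 \<in> ?S2"
      then show "ennreal (\<nu> B1) + ennreal (\<nu> B2) \<le> upper_variation_fun M \<nu> (A \<union> C)"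
        using B1 d by (intro ennreal_add_le_upper_variation_fun[OF s]) auto
    qed
    finally show ?thesis .
  qed
  have "upper_variation_fun M \<nu> A + upper_variation_fun M \<nu> C =
      (SUP B1\<in>?S1. ennreal (\<nu> B1) + upper_variation_fun M \<nu> C)"
    unfolding upper_variation_fun_def[of M \<nu> A] by (rule ennreal_SUP_add_left[OF ne(1), symmetric])
  also have "\<dots> \<le> upper_variation_fun M \<nu> (A \<union> C)"
    by (rule SUP_least) (rule step)
  finally show ?thesis .
qed

lemma upper_variation_fun_Un:
  assumes "signed_measure M \<nu>" "A \<in> sets M" "C \<in> sets M" "A \<inter> C = {}"
  shows "upper_variation_fun M \<nu> (A \<union> C) = upper_variation_fun M \<nu> A + upper_variation_fun M \<nu> C"
  using upper_variation_fun_Un_le[OF assms] upper_variation_fun_add_le_Un[OF assms(1,4)] by (rule antisym)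

lemma upper_variation_fun_finite_UN:
  fixes A :: "nat \<Rightarrow> 'a set"
  assumes s: "signed_measure M \<nu>" and A: "range A \<subseteq> sets M" and d: "disjoint_family A"
  shows "upper_variation_fun M \<nu> (\<Union>n<N. A n) = (\<Sum>n<N. upper_variation_fun M \<nu> (A n))"
proof (induct N)
  case 0
  then show ?case using upper_variation_fun_empty[OF s] by simp
next
  case (Suc N)
  have "(\<Union>n<N. A n) \<inter> A N = {}"
    using d unfolding disjoint_family_on_def by (force simp: nat_neq_iff)
  moreover have "(\<Union>n<N. A n) \<in> sets M" "A N \<in> sets M" using A by auto
  moreover have "(\<Union>n<Suc N. A n) = (\<Union>n<N. A n) \<union> A N" by (auto simp: lessThan_Suc)
  ultimately show ?case using Suc upper_variation_fun_Un[OF s] by simp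
qed

lemma countably_additive_upper_variation_fun:
  assumes s: "signed_measure M \<nu>"
  shows "countably_additive (sets M) (upper_variation_fun M \<nu>)"
proof (rule countably_additiveI)
  fix A :: "nat \<Rightarrow> 'a set" assume A: "range A \<subseteq> sets M" and d: "disjoint_family A"
  show "(\<Sum>i. upper_variation_fun M \<nu> (A i)) = upper_variation_fun M \<nu> (\<Union>i. A i)"
  proof (rule antisym)
    have "(\<Sum>i<N. upper_variation_fun M \<nu> (A i)) \<le> upper_variation_fun M \<nu> (\<Union>i. A i)" for N
      unfolding upper_variation_fun_finite_UN[OF s A d, symmetric]
      by (rule upper_variation_fun_mono) blast
    then show "(\<Sum>i. upper_variation_fun M \<nu> (A i)) \<le> upper_variation_fun M \<nu> (\<Union>i. A i)"
      unfolding suminf_eq_SUP by (rule SUP_least)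
  next
    show "upper_variation_fun M \<nu> (\<Union>i. A i) \<le> (\<Sum>i. upper_variation_fun M \<nu> (A i))"
      unfolding upper_variation_fun_def[of M \<nu> "\<Union>i. A i"]
    proof (rule SUP_least)
      fix B assume "B \<in> {B \<in> sets M. B \<subseteq> (\<Union>i. A i)}"
      then have B: "B \<in> sets M" and "(\<Union>n. B \<inter> A n) = B" by auto
      moreover have "range (\<lambda>n. B \<inter> A n) \<subseteq> sets M" "disjoint_family (\<lambda>n. B \<inter> A n)"
        using A B d unfolding disjoint_family_on_def by auto
      ultimately have "(\<lambda>n. \<nu> (B \<inter> A n)) sums \<nu> B"
        using s unfolding signed_measure_def by metis
      then have "ennreal (\<nu> B) \<le> (\<Sum>n. ennreal (\<nu> (B \<inter> A n)))" by (rule ennreal_le_suminf_of_sums)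
      also have "\<dots> \<le> (\<Sum>n. upper_variation_fun M \<nu> (A n))"
        using A B by (intro suminf_le upper_variation_fun_upper) auto
      finally show "ennreal (\<nu> B) \<le> (\<Sum>n. upper_variation_fun M \<nu> (A n))" .
    qed
  qed
qed

lemma emeasure_upper_variation:
  assumes s: "signed_measure M \<nu>" and A: "A \<in> sets M"
  shows "emeasure (upper_variation M \<nu>) A = upper_variation_fun M \<nu> A"
  unfolding upper_variation_def upper_variation_fun_def[symmetric]
proof (rule emeasure_measure_of_sigma)
  show "sigma_algebra (space M) (sets M)" ..
  show "positive (sets M) (upper_variation_fun M \<nu>)"
    using upper_variation_fun_empty[OF s] by (simp add: positive_def)
qed (fact countably_additive_upper_variation_fun[OF s] A)+

lemma emeasure_lower_variation:
  "signed_measure M \<nu> \<Longrightarrow> A \<in> sets M \<Longrightarrow>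
    emeasure (lower_variation M \<nu>) A = upper_variation_fun M (\<lambda>A. - \<nu> A) A"
  unfolding lower_variation_eq_upper_variation_uminus
  by (rule emeasure_upper_variation[OF signed_measure_uminus])

lemma upper_variation_fun_le_add_lower:
  assumes s: "signed_measure M \<nu>" and A: "A \<in> sets M"
    and q: "upper_variation_fun M (\<lambda>A. - \<nu> A) A = ennreal q" "0 \<le> q"
  shows "upper_variation_fun M \<nu> A \<le> ennreal (\<nu> A + q)"
  unfolding upper_variation_fun_def[of M \<nu> A]
proof (rule SUP_least)
  fix B assume B: "B \<in> {B \<in> sets M. B \<subseteq> A}"
  have "ennreal (- \<nu> (A - B)) \<le> ennreal q"
    using A B q(1) upper_variation_fun_upper[of "A - B" M A "\<lambda>A. - \<nu> A"] by auto
  then have "- \<nu> (A - B) \<le> q" using q(2) by (simp add: ennreal_le_iff)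
  moreover have "\<nu> (A - B) = \<nu> A - \<nu> B" using s A B by (intro signed_measure_Diff) auto
  ultimately show "ennreal (\<nu> B) \<le> ennreal (\<nu> A + q)"
    by (intro ennreal_leI) simp
qed

lemma signed_measure_eq_diff_variations:
  assumes s: "signed_measure M \<nu>" and A: "A \<in> sets M"
    and fin: "finite_measure (upper_variation M \<nu>)" "finite_measure (lower_variation M \<nu>)"
  shows "\<nu> A = measure (upper_variation M \<nu>) A - measure (lower_variation M \<nu>) A"
proof -
  let ?p = "measure (upper_variation M \<nu>) A" and ?q = "measure (lower_variation M \<nu>) A"
  have p: "upper_variation_fun M \<nu> A = ennreal ?p"
    using emeasure_upper_variation[OF s A] finite_measure.emeasure_eq_measure[OF fin(1)] by simp
  have q: "upper_variation_fun M (\<lambda>A. - \<nu> A) A = ennreal ?q"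
    using emeasure_lower_variation[OF s A] finite_measure.emeasure_eq_measure[OF fin(2)] by simp
  have "ennreal (\<nu> A) \<le> ennreal ?p" "ennreal (- \<nu> A) \<le> ennreal ?q"
    using A p q upper_variation_fun_upper[of A M A \<nu>] upper_variation_fun_upper[of A M A "\<lambda>A. - \<nu> A"]
    by simp_all
  then have le: "\<nu> A \<le> ?p" "- \<nu> A \<le> ?q" by (simp_all add: ennreal_le_iff)
  have p': "upper_variation_fun M (\<lambda>A. - (- \<nu> A)) A = ennreal ?p" using p by simp
  have "ennreal ?p \<le> ennreal (\<nu> A + ?q)"
    using upper_variation_fun_le_add_lower[OF s A q measure_nonneg] p by simp
  moreover have "ennreal ?q \<le> ennreal (- \<nu> A + ?p)"
    using upper_variation_fun_le_add_lower[OF signed_measure_uminus[OF s] A p' measure_nonneg] q by simp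
  ultimately show ?thesis using le by (simp add: ennreal_le_iff)
qed

lemma signed_measure_measure_diff:
  assumes "finite_measure M1" "finite_measure M2" "sets M1 = sets M" "sets M2 = sets M"
  shows "signed_measure M (\<lambda>A. measure M1 A - measure M2 A)"
  unfolding signed_measure_def
proof (intro conjI allI impI)
  fix F :: "nat \<Rightarrow> 'a set" assume "range F \<subseteq> sets M" "disjoint_family F"
  then show "(\<lambda>n. measure M1 (F n) - measure M2 (F n)) sums (measure M1 (\<Union>n. F n) - measure M2 (\<Union>n. F n))"
    using assms by (intro sums_diff finite_measure.finite_measure_UNION) auto
qed simp

lemma emeasure_upper_variation_measure_diff_le:
  assumes fin: "finite_measure M1" "finite_measure M2" and sets: "sets M1 = sets M" "sets M2 = sets M"
    and E: "E \<in> sets M"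
  shows "emeasure (upper_variation M (\<lambda>A. measure M1 A - measure M2 A)) E \<le> emeasure M1 E"
  unfolding emeasure_upper_variation[OF signed_measure_measure_diff[OF assms(1-4)] E]
    upper_variation_fun_def
proof (rule SUP_least)
  fix B assume "B \<in> {B \<in> sets M. B \<subseteq> E}"
  then have "measure M1 B \<le> measure M1 E"
    using E sets finite_measure.finite_measure_mono[OF fin(1)] by auto
  then have "measure M1 B - measure M2 B \<le> measure M1 E"
    using measure_nonneg[of M2 B] by linarith
  then show "ennreal (measure M1 B - measure M2 B) \<le> emeasure M1 E"
    by (simp add: finite_measure.emeasure_eq_measure[OF fin(1)] ennreal_leI)
qed

lemma emeasure_lower_variation_measure_diff_le:
  assumes "finite_measure M1" "finite_measure M2" "sets M1 = sets M" "sets M2 = sets M" "E \<in> sets M"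
  shows "emeasure (lower_variation M (\<lambda>A. measure M1 A - measure M2 A)) E \<le> emeasure M2 E"
  using emeasure_upper_variation_measure_diff_le[of M2 M1 M E] assms
  by (simp add: lower_variation_eq_upper_variation_uminus)

lemma lebesgue_decomposition_lower_variation_measure_diff:
  assumes "finite_measure M1" "finite_measure M2" "sets M1 = sets M" "sets M2 = sets M"
  defines "L \<equiv> lower_variation M (\<lambda>A. measure M1 A - measure M2 A)"
  shows "lebesgue_decomposition M2 L L (null_measure L)"
  unfolding L_def using assms
  by (intro lebesgue_decomposition_trivial absolutely_continuous_if_dominated)
    (simp_all add: emeasure_lower_variation_measure_diff_le)

lemma ess_bounded_RN_deriv_lower_variation_measure_diff:
  assumes "finite_measure M1" "finite_measure M2" "sets M1 = sets M" "sets M2 = sets M"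
  shows "ess_bounded M2 (RN_deriv M2 (lower_variation M (\<lambda>A. measure M1 A - measure M2 A)))"
proof -
  have "AE x in M2. RN_deriv M2 (lower_variation M (\<lambda>A. measure M1 A - measure M2 A)) x \<le> 1"
    by (rule AE_RN_deriv_le_1) (use assms in \<open>simp_all add: emeasure_lower_variation_measure_diff_le\<close>)
  then show ?thesis unfolding ess_bounded_def by (intro exI[of _ 1]) simp
qed

lemma plus_measure_variations:
  assumes s: "signed_measure M \<nu>" and fin: "finite_measure (upper_variation M \<nu>)"
    "finite_measure (lower_variation M \<nu>)" "finite_measure M1" "finite_measure M2"
    and sets: "sets M1 = sets M" "sets M2 = sets M"
    and \<nu>: "\<And>A. A \<in> sets M \<Longrightarrow> \<nu> A = measure M1 A - measure M2 A"
  shows "plus_measure (upper_variation M \<nu>) M2 = plus_measure (lower_variation M \<nu>) M1"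
proof (rule measure_eqI)
  fix E assume "E \<in> sets (plus_measure (upper_variation M \<nu>) M2)"
  then have E: "E \<in> sets M" by simp
  have "measure (upper_variation M \<nu>) E + measure M2 E = measure (lower_variation M \<nu>) E + measure M1 E"
    using signed_measure_eq_diff_variations[OF s E fin(1,2)] \<nu>[OF E] by simp
  then show "emeasure (plus_measure (upper_variation M \<nu>) M2) E =
      emeasure (plus_measure (lower_variation M \<nu>) M1) E"
    using fin sets measure_nonneg
    by (simp add: emeasure_plus_measure finite_measure.emeasure_eq_measure ennreal_plus[symmetric]
        del: ennreal_plus)
qed simp

section \<open>Radon measures\<close>

lemma space_borel_of[simp]: "space (borel_of X) = topspace X"
  unfolding borel_of_def by (simp add: space_measure_of_conv)

lemma openin_in_borel_of: "openin X U \<Longrightarrow> U \<in> sets (borel_of X)"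
proof -
  have "sets (borel_of X) = sigma_sets (topspace X) {U. openin X U}"
    unfolding borel_of_def using openin_subset by (intro sets_measure_of) auto
  then show "openin X U \<Longrightarrow> U \<in> sets (borel_of X)" by auto
qed

lemma compactin_in_borel_of:
  assumes "Hausdorff_space X" "compactin X K"
  shows "K \<in> sets (borel_of X)"
proof -
  have "closedin X K" using assms by (rule compactin_imp_closedin)
  then have "topspace X - (topspace X - K) \<in> sets (borel_of X)"
    using openin_in_borel_of[of X "topspace X - K"] sets.compl_sets[of "topspace X - K" "borel_of X"]
    by (simp add: closedin_def)
  then show ?thesis using closedin_subset[OF \<open>closedin X K\<close>] by (simp add: Diff_Diff_Int Int_absorb1)
qed

lemma borel_measurable_continuous_map:
  fixes f :: "'a \<Rightarrow> 'b::topological_space"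
  assumes "continuous_map X euclidean f"
  shows "f \<in> borel_measurable (borel_of X)"
proof (rule borel_measurableI)
  fix S :: "'b set" assume "open S"
  then have "openin X {x \<in> topspace X. f x \<in> S}"
    using assms by (intro openin_continuous_map_preimage) (simp_all only: open_openin)
  moreover have "f -` S \<inter> space (borel_of X) = {x \<in> topspace X. f x \<in> S}" by auto
  ultimately show "f -` S \<inter> space (borel_of X) \<in> sets (borel_of X)"
    by (simp add: openin_in_borel_of)
qed

lemma radonD:
  assumes "radon X M"
  shows "sets M = sets (borel_of X)" "finite_measure M"
    and "A \<in> sets M \<Longrightarrow> emeasure M A = (INF U\<in>{U. openin X U \<and> A \<subseteq> U}. emeasure M U)"
    and "A \<in> sets M \<Longrightarrow> emeasure M A = (SUP K\<in>{K. compactin X K \<and> K \<subseteq> A}. emeasure M K)"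
  using assms unfolding radon_def by blast+

lemma radon_outer_diff:
  assumes r: "radon X M" and A: "A \<in> sets M" and e: "0 < e"
  obtains U where "openin X U" "A \<subseteq> U" "U \<in> sets M" "emeasure M (U - A) \<le> ennreal e"
proof -
  interpret finite_measure M using r by (rule radonD)
  have "emeasure M A < emeasure M A + ennreal e"
    using e by (simp add: ennreal_add_left_cancel_less)
  then have "(INF U\<in>{U. openin X U \<and> A \<subseteq> U}. emeasure M U) < emeasure M A + ennreal e"
    using radonD(3)[OF r A] by simp
  then obtain U where U: "openin X U" "A \<subseteq> U" "emeasure M U < emeasure M A + ennreal e"
    by (auto simp: INF_less_iff)
  have Us: "U \<in> sets M" using U(1) radonD(1)[OF r] openin_in_borel_of by simp
  have "emeasure M U = emeasure M A + emeasure M (U - A)"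
    using A Us U(2) by (metis Diff_disjoint Diff_partition plus_emeasure sets.Diff)
  then have "emeasure M (U - A) \<le> ennreal e"
    using U(3) by (simp add: ennreal_add_left_cancel_less less_imp_le)
  with U Us show thesis by (intro that)
qed

lemma radon_inner_diff:
  assumes r: "radon X M" and A: "A \<in> sets M" and e: "0 < e" and X: "Hausdorff_space X"
  obtains K where "compactin X K" "K \<subseteq> A" "K \<in> sets M" "emeasure M (A - K) \<le> ennreal e"
proof -
  interpret finite_measure M using r by (rule radonD)
  have ne: "{K. compactin X K \<and> K \<subseteq> A} \<noteq> {}" by (auto intro!: exI[of _ "{}"])
  have "emeasure M A < emeasure M A + ennreal e"
    using e by (simp add: ennreal_add_left_cancel_less)
  also have "\<dots> = (SUP K\<in>{K. compactin X K \<and> K \<subseteq> A}. emeasure M K + ennreal e)"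
    using radonD(4)[OF r A] ennreal_SUP_add_left[OF ne] by simp
  finally obtain K where K: "compactin X K" "K \<subseteq> A" "emeasure M A < emeasure M K + ennreal e"
    by (auto simp: less_SUP_iff)
  have Ks: "K \<in> sets M" using K(1) X radonD(1)[OF r] compactin_in_borel_of by simp
  have "emeasure M A = emeasure M K + emeasure M (A - K)"
    using A Ks K(2) by (metis Diff_disjoint Diff_partition plus_emeasure sets.Diff)
  then have "emeasure M (A - K) \<le> ennreal e"
    using K(3) by (simp add: ennreal_add_left_cancel_less less_imp_le)
  with K Ks show thesis by (intro that)
qed

lemma radonI:
  assumes sN: "sets N = sets (borel_of X)" and fN: "finite_measure N"
    and outer: "\<And>A e. A \<in> sets N \<Longrightarrow> 0 < e \<Longrightarrow>
      \<exists>U. openin X U \<and> A \<subseteq> U \<and> U \<in> sets N \<and> emeasure N (U - A) \<le> ennreal e"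
    and inner: "\<And>A e. A \<in> sets N \<Longrightarrow> 0 < e \<Longrightarrow>
      \<exists>K. compactin X K \<and> K \<subseteq> A \<and> K \<in> sets N \<and> emeasure N (A - K) \<le> ennreal e"
  shows "radon X N"
  unfolding radon_def
proof (intro conjI ballI sN fN antisym)
  fix A assume A: "A \<in> sets N"
  show "emeasure N A \<le> (INF U\<in>{U. openin X U \<and> A \<subseteq> U}. emeasure N U)"
    using sN openin_in_borel_of by (auto intro!: INF_greatest emeasure_mono)
  show "(SUP K\<in>{K. compactin X K \<and> K \<subseteq> A}. emeasure N K) \<le> emeasure N A"
    using A by (auto intro!: SUP_least emeasure_mono)
  show "(INF U\<in>{U. openin X U \<and> A \<subseteq> U}. emeasure N U) \<le> emeasure N A"
  proof (rule ennreal_le_epsilon)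
    fix e :: real assume "0 < e"
    then obtain U where U: "openin X U" "A \<subseteq> U" "U \<in> sets N" "emeasure N (U - A) \<le> ennreal e"
      using outer[OF A] by blast
    have "(INF U\<in>{U. openin X U \<and> A \<subseteq> U}. emeasure N U) \<le> emeasure N U"
      using U by (intro INF_lower) auto
    also have "\<dots> = emeasure N A + emeasure N (U - A)"
      using A U by (metis Diff_disjoint Diff_partition plus_emeasure sets.Diff)
    finally show "(INF U\<in>{U. openin X U \<and> A \<subseteq> U}. emeasure N U) \<le> emeasure N A + ennreal e"
      using U(4) by (meson add_left_mono order_trans)
  qed
  show "emeasure N A \<le> (SUP K\<in>{K. compactin X K \<and> K \<subseteq> A}. emeasure N K)"
  proof (rule ennreal_le_epsilon)
    fix e :: real assume "0 < e"
    then obtain K where K: "compactin X K" "K \<subseteq> A" "K \<in> sets N" "emeasure N (A - K) \<le> ennreal e"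
      using inner[OF A] by blast
    have "emeasure N A = emeasure N K + emeasure N (A - K)"
      using A K by (metis Diff_disjoint Diff_partition plus_emeasure sets.Diff)
    also have "\<dots> \<le> (SUP K\<in>{K. compactin X K \<and> K \<subseteq> A}. emeasure N K) + ennreal e"
      using K by (intro add_mono SUP_upper) auto
    finally show "emeasure N A \<le> (SUP K\<in>{K. compactin X K \<and> K \<subseteq> A}. emeasure N K) + ennreal e" .
  qed
qed

lemma radon_dominated:
  assumes r1: "radon X M1" and r2: "radon X M2" and X: "Hausdorff_space X"
    and sN: "sets N = sets (borel_of X)"
    and dom: "\<And>E. E \<in> sets N \<Longrightarrow> emeasure N E \<le> emeasure M1 E + emeasure M2 E"
  shows "radon X N"
proof (rule radonI[OF sN])
  have s: "sets M1 = sets N" "sets M2 = sets N" using radonD(1)[OF r1] radonD(1)[OF r2] sN by simp_all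
  show "finite_measure N"
    using s dom[OF sets.top]
    by (intro finite_measure_dominated[OF radonD(2)[OF r1] radonD(2)[OF r2]]) simp_all
  fix A and e :: real assume A: "A \<in> sets N" and "0 < e"
  then have e2: "0 < e / 2" by simp
  have ee: "ennreal (e/2) + ennreal (e/2) = ennreal e" using e2 by (simp flip: ennreal_plus)
  obtain U1 where U1: "openin X U1" "A \<subseteq> U1" "U1 \<in> sets N" "emeasure M1 (U1 - A) \<le> ennreal (e/2)"
    using radon_outer_diff[OF r1 _ e2, of A] A s by auto
  obtain U2 where U2: "openin X U2" "A \<subseteq> U2" "U2 \<in> sets N" "emeasure M2 (U2 - A) \<le> ennreal (e/2)"
    using radon_outer_diff[OF r2 _ e2, of A] A s by auto
  have "emeasure N (U1 \<inter> U2 - A) \<le> emeasure M1 (U1 \<inter> U2 - A) + emeasure M2 (U1 \<inter> U2 - A)"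
    using U1 U2 A by (intro dom) auto
  also have "\<dots> \<le> emeasure M1 (U1 - A) + emeasure M2 (U2 - A)"
    using U1 U2 A s by (intro add_mono emeasure_mono) auto
  also have "\<dots> \<le> ennreal e" using U1 U2 ee by (metis add_mono)
  finally show "\<exists>U. openin X U \<and> A \<subseteq> U \<and> U \<in> sets N \<and> emeasure N (U - A) \<le> ennreal e"
    using U1 U2 by (intro exI[of _ "U1 \<inter> U2"]) auto
  obtain K1 where K1: "compactin X K1" "K1 \<subseteq> A" "K1 \<in> sets N" "emeasure M1 (A - K1) \<le> ennreal (e/2)"
    using radon_inner_diff[OF r1 _ e2 X, of A] A s by auto
  obtain K2 where K2: "compactin X K2" "K2 \<subseteq> A" "K2 \<in> sets N" "emeasure M2 (A - K2) \<le> ennreal (e/2)"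
    using radon_inner_diff[OF r2 _ e2 X, of A] A s by auto
  have "emeasure N (A - (K1 \<union> K2)) \<le> emeasure M1 (A - (K1 \<union> K2)) + emeasure M2 (A - (K1 \<union> K2))"
    using K1 K2 A by (intro dom) auto
  also have "\<dots> \<le> emeasure M1 (A - K1) + emeasure M2 (A - K2)"
    using K1 K2 A s by (intro add_mono emeasure_mono) auto
  also have "\<dots> \<le> ennreal e" using K1 K2 ee by (metis add_mono)
  finally show "\<exists>K. compactin X K \<and> K \<subseteq> A \<and> K \<in> sets N \<and> emeasure N (A - K) \<le> ennreal e"
    using K1 K2 by (intro exI[of _ "K1 \<union> K2"]) (auto simp: compactin_Un)
qed

lemma Hausdorff_space_Gdelta_top: "Hausdorff_space Gdelta_top"
  unfolding Gdelta_top_def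
  by (rule Hausdorff_space_subtopology)
    (metis Hausdorff_space_euclidean Hausdorff_space_product_topology)

lemma borel_measurable_eval_Gdelta:
  "(\<lambda>\<gamma>. \<gamma> g) \<in> borel_measurable (borel_of (Gdelta_top :: ('g::ab_group_add \<Rightarrow> quat) topology))"
proof (rule borel_measurable_continuous_map)
  show "continuous_map Gdelta_top euclidean (\<lambda>\<gamma>::'g \<Rightarrow> quat. \<gamma> g)"
    unfolding Gdelta_top_def
    by (rule continuous_map_from_subtopology) (rule continuous_map_product_projection, simp)
qed

lemma norm_eval_Gdelta: "\<gamma> \<in> topspace Gdelta_top \<Longrightarrow> norm (\<gamma> g) = 1"
  by (simp add: Gdelta_top_def Gdelta_def qsphere_def)

lemma integrable_eval_Gdelta:
  fixes M :: "('g::ab_group_add \<Rightarrow> quat) measure"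
  assumes sM: "sets M = sets (borel_of Gdelta_top)" and "finite_measure M"
  shows "integrable M (\<lambda>\<gamma>. \<gamma> g)"
proof (rule finite_measure.integrable_const_bound[where B=1])
  show "(\<lambda>\<gamma>. \<gamma> g) \<in> borel_measurable M"
    using borel_measurable_eval_Gdelta sM by (simp cong: measurable_cong_sets)
  show "AE x in M. norm (x g) \<le> 1"
    using sets_eq_imp_space_eq[OF sM] by (intro AE_I2) (simp add: norm_eval_Gdelta)
qed fact

section \<open>Perturbing a measure by a signed measure\<close>

text \<open>For 0 \<le> r \<le> c this is the nonnegative measure M + (P - r M)/c.\<close>

definition perturbed_measure :: "'a measure \<Rightarrow> ('a \<Rightarrow> real) \<Rightarrow> real \<Rightarrow> 'a measure \<Rightarrow> 'a measure" where
  "perturbed_measure M r c P =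
     plus_measure (density M (\<lambda>x. ennreal (1 - r x / c))) (density P (\<lambda>_. ennreal (1 / c)))"

lemma sets_perturbed_measure[simp, measurable_cong]: "sets (perturbed_measure M r c P) = sets M"
  by (simp add: perturbed_measure_def)

lemma emeasure_perturbed_measure_le:
  assumes sP: "sets P = sets M" and r: "r \<in> borel_measurable M" "\<And>x. 0 \<le> r x" and c: "1 \<le> c"
    and E: "E \<in> sets M"
  shows "emeasure (perturbed_measure M r c P) E \<le> emeasure M E + emeasure P E"
proof -
  note r(1)[measurable]
  have "ennreal (1 - r x / c) * indicator E x \<le> indicator E x" for x
  proof -
    have "ennreal (1 - r x / c) \<le> 1" using r(2)[of x] c by simp
    then show ?thesis by (metis mult_1 mult_right_mono zero_le)
  qed
  then have "(\<integral>\<^sup>+x. ennreal (1 - r x / c) * indicator E x \<partial>M) \<le> (\<integral>\<^sup>+x. indicator E x \<partial>M)"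
    by (intro nn_integral_mono)
  then have "emeasure (density M (\<lambda>x. ennreal (1 - r x / c))) E \<le> emeasure M E"
    using E by (simp add: emeasure_density)
  moreover have "emeasure (density P (\<lambda>_. ennreal (1 / c))) E \<le> emeasure P E"
  proof -
    have "ennreal (1 / c) \<le> 1" using c by simp
    then have "ennreal (1 / c) * emeasure P E \<le> emeasure P E" by (metis mult_1 mult_right_mono zero_le)
    then show ?thesis using E sP by (simp add: emeasure_density nn_integral_cmult_indicator)
  qed
  ultimately show ?thesis
    using E sP by (simp add: perturbed_measure_def emeasure_plus_measure add_mono)
qed

lemma finite_measure_perturbed_measure:
  assumes "finite_measure M" "finite_measure P" "sets P = sets M"
    and "r \<in> borel_measurable M" "\<And>x. 0 \<le> r x" "1 \<le> c"
  shows "finite_measure (perturbed_measure M r c P)"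
proof (rule finite_measure_dominated)
  have "space (perturbed_measure M r c P) = space M"
    by (rule sets_eq_imp_space_eq) simp
  moreover have "emeasure (perturbed_measure M r c P) (space M) \<le> emeasure M (space M) + emeasure P (space M)"
    by (rule emeasure_perturbed_measure_le[OF assms(3-6)]) simp
  ultimately show "emeasure (perturbed_measure M r c P) (space (perturbed_measure M r c P))
      \<le> emeasure M (space (perturbed_measure M r c P)) + emeasure P (space (perturbed_measure M r c P))"
    by simp
qed (use assms in simp_all)

lemma integral_density_1_minus:
  fixes f :: "'a \<Rightarrow> 'b::{banach, second_countable_topology}"
  assumes L: "L = density M (\<lambda>x. ennreal (r x))"
    and r[measurable]: "r \<in> borel_measurable M" "\<And>x. 0 \<le> r x" and rc: "AE x in M. r x \<le> c"
    and c: "0 < c" and f[measurable]: "integrable M f" "integrable L f"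
  shows "integral\<^sup>L (density M (\<lambda>x. ennreal (1 - r x / c))) f = integral\<^sup>L M f - (1/c) *\<^sub>R integral\<^sup>L L f"
proof -
  have rf: "integrable M (\<lambda>x. r x *\<^sub>R f x)"
    using f(2) unfolding L by (subst (asm) integrable_density) (use r in auto)
  have "integral\<^sup>L (density M (\<lambda>x. ennreal (1 - r x / c))) f = integral\<^sup>L M (\<lambda>x. (1 - r x / c) *\<^sub>R f x)"
  proof (rule integral_density)
    show "AE x in M. 0 \<le> 1 - r x / c" using rc by eventually_elim (use c in simp)
  qed (use f in simp_all)
  also have "\<dots> = integral\<^sup>L M (\<lambda>x. f x - (1/c) *\<^sub>R (r x *\<^sub>R f x))"
    by (rule Bochner_Integration.integral_cong) (auto simp: scaleR_diff_left)
  also have "\<dots> = integral\<^sup>L M f - integral\<^sup>L M (\<lambda>x. (1/c) *\<^sub>R (r x *\<^sub>R f x))"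
    by (rule Bochner_Integration.integral_diff[OF f(1) integrable_scaleR_right[OF rf]])
  also have "integral\<^sup>L M (\<lambda>x. (1/c) *\<^sub>R (r x *\<^sub>R f x)) = (1/c) *\<^sub>R integral\<^sup>L M (\<lambda>x. r x *\<^sub>R f x)"
    by (rule integral_scaleR_right)
  also have "integral\<^sup>L M (\<lambda>x. r x *\<^sub>R f x) = integral\<^sup>L L f"
    unfolding L by (rule integral_density[symmetric]) (use r f in auto)
  finally show ?thesis .
qed

lemma integral_perturbed_measure:
  fixes f :: "'a \<Rightarrow> 'b::{banach, second_countable_topology}"
  assumes fM: "finite_measure M" and fP: "finite_measure P" and fL: "finite_measure L"
    and sP: "sets P = sets M" and L: "L = density M (\<lambda>x. ennreal (r x))"
    and r[measurable]: "r \<in> borel_measurable M" "\<And>x. 0 \<le> r x" and rc: "AE x in M. r x \<le> c"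
    and c: "1 \<le> c"
    and f[measurable]: "f \<in> borel_measurable M" and fb: "\<And>x. x \<in> space M \<Longrightarrow> norm (f x) \<le> B"
  shows "integral\<^sup>L (perturbed_measure M r c P) f
       = integral\<^sup>L M f - (1/c) *\<^sub>R integral\<^sup>L L f + (1/c) *\<^sub>R integral\<^sup>L P f"
proof -
  let ?D1 = "density M (\<lambda>x. ennreal (1 - r x / c))" and ?D2 = "density P (\<lambda>_. ennreal (1/c))"
  have sL: "sets L = sets M" unfolding L by simp
  have fmP: "f \<in> borel_measurable P" and fmL: "f \<in> borel_measurable L"
    using f sP sL by (simp_all cong: measurable_cong_sets)
  have bounded: "integrable K f" if "finite_measure K" "space K = space M" "f \<in> borel_measurable K" for K
    using that fb by (intro finite_measure.integrable_const_bound[where B=B]) (auto intro: AE_I2)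
  have iM: "integrable M f" by (rule bounded[OF fM refl f])
  have iL: "integrable L f" by (rule bounded[OF fL sets_eq_imp_space_eq[OF sL] fmL])
  have "integrable (perturbed_measure M r c P) f"
    by (rule bounded[OF finite_measure_perturbed_measure[OF fM fP sP r c]])
      (simp_all add: sets_eq_imp_space_eq[of "perturbed_measure M r c P" M])
  then have "integral\<^sup>L (perturbed_measure M r c P) f = integral\<^sup>L ?D1 f + integral\<^sup>L ?D2 f"
    unfolding perturbed_measure_def using sP by (intro integral_plus_measure) simp_all
  also have "integral\<^sup>L ?D1 f = integral\<^sup>L M f - (1/c) *\<^sub>R integral\<^sup>L L f"
    using c by (intro integral_density_1_minus[OF L r rc _ iM iL]) simp
  also have "integral\<^sup>L ?D2 f = integral\<^sup>L P (\<lambda>x. (1/c) *\<^sub>R f x)"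
    by (rule integral_density[OF fmP]) (use c in auto)
  also have "\<dots> = (1/c) *\<^sub>R integral\<^sup>L P f"
    by (rule integral_scaleR_right)
  finally show ?thesis by simp
qed

section \<open>Uniqueness of the representing measure\<close>

lemma measure_diff_in_K_Gdelta:
  fixes \<mu> \<mu>' :: "('g::ab_group_add \<Rightarrow> quat) measure"
  assumes r: "radon Gdelta_top \<mu>" and r': "radon Gdelta_top \<mu>'"
    and same: "\<And>g. (\<integral>\<gamma>. \<gamma> g \<partial>\<mu>') = (\<integral>\<gamma>. \<gamma> g \<partial>\<mu>)"
  shows "(\<lambda>A. measure \<mu>' A - measure \<mu> A) \<in> K_Gdelta"
proof -
  let ?B = "borel_of (Gdelta_top :: ('g \<Rightarrow> quat) topology)"
  let ?\<nu> = "\<lambda>A. measure \<mu>' A - measure \<mu> A"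
  let ?P = "upper_variation ?B ?\<nu>" and ?L = "lower_variation ?B ?\<nu>"
  have s: "sets \<mu> = sets ?B" "sets \<mu>' = sets ?B" and f: "finite_measure \<mu>" "finite_measure \<mu>'"
    using radonD(1,2)[OF r] radonD(1,2)[OF r'] by simp_all
  have sm: "signed_measure ?B ?\<nu>" by (rule signed_measure_measure_diff[OF f(2,1) s(2,1)])
  have domP: "emeasure ?P E \<le> emeasure \<mu>' E + emeasure \<mu>' E" if "E \<in> sets ?P" for E
    using emeasure_upper_variation_measure_diff_le[OF f(2,1) s(2,1), of E] that
    by (simp add: add_increasing2)
  have domL: "emeasure ?L E \<le> emeasure \<mu> E + emeasure \<mu> E" if "E \<in> sets ?L" for E
    using emeasure_lower_variation_measure_diff_le[OF f(2,1) s(2,1), of E] that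
    by (simp add: add_increasing2)
  have rad: "radon Gdelta_top ?P" "radon Gdelta_top ?L"
    using radon_dominated[OF r' r' Hausdorff_space_Gdelta_top _ domP]
      radon_dominated[OF r r Hausdorff_space_Gdelta_top _ domL] by simp_all
  then have fin: "finite_measure ?P" "finite_measure ?L" by (simp_all add: radonD(2))
  have eq: "plus_measure ?P \<mu> = plus_measure ?L \<mu>'"
    by (rule plus_measure_variations[OF sm fin f(2,1) s(2,1)]) simp
  have "(\<integral>\<gamma>. \<gamma> g \<partial>?P) - (\<integral>\<gamma>. \<gamma> g \<partial>?L) = 0" for g
  proof -
    have "finite_measure (plus_measure ?P \<mu>)" "finite_measure (plus_measure ?L \<mu>')"
      using s by (simp_all add: finite_measure_plus_measure fin f)
    then have i: "integrable (plus_measure ?P \<mu>) (\<lambda>\<gamma>. \<gamma> g)" "integrable (plus_measure ?L \<mu>') (\<lambda>\<gamma>. \<gamma> g)"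
      by (simp_all add: integrable_eval_Gdelta)
    have "(\<integral>\<gamma>. \<gamma> g \<partial>?P) + (\<integral>\<gamma>. \<gamma> g \<partial>\<mu>) = (\<integral>\<gamma>. \<gamma> g \<partial>?L) + (\<integral>\<gamma>. \<gamma> g \<partial>\<mu>')"
      using integral_plus_measure[OF _ i(1)] integral_plus_measure[OF _ i(2)] eq s by simp
    then show ?thesis using same[of g] by simp
  qed
  then show ?thesis
    unfolding K_Gdelta_def signed_radon_def using sm rad by blast
qed

lemma K_Gdelta_eq_0_if_bounded_density:
  fixes \<mu> :: "('g::ab_group_add \<Rightarrow> quat) measure"
  assumes r: "radon Gdelta_top \<mu>"
    and unique: "\<And>\<mu>'. radon Gdelta_top \<mu>' \<Longrightarrow> (\<And>g. (\<integral>\<gamma>. \<gamma> g \<partial>\<mu>') = (\<integral>\<gamma>. \<gamma> g \<partial>\<mu>)) \<Longrightarrow> \<mu>' = \<mu>"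
    and K: "\<nu> \<in> K_Gdelta"
    and ac: "absolutely_continuous \<mu> (lower_variation (borel_of Gdelta_top) \<nu>)"
    and bounded: "ess_bounded \<mu> (RN_deriv \<mu> (lower_variation (borel_of Gdelta_top) \<nu>))"
    and A: "A \<in> sets (borel_of Gdelta_top)"
  shows "\<nu> A = 0"
proof -
  let ?B = "borel_of (Gdelta_top :: ('g \<Rightarrow> quat) topology)"
  let ?P = "upper_variation ?B \<nu>" and ?L = "lower_variation ?B \<nu>"
  have s: "sets \<mu> = sets ?B" and fin: "finite_measure \<mu>" using radonD(1,2)[OF r] by simp_all
  have sm: "signed_measure ?B \<nu>" and rP: "radon Gdelta_top ?P" and rL: "radon Gdelta_top ?L"
    and int_eq: "\<And>g. (\<integral>\<gamma>. \<gamma> g \<partial>?P) = (\<integral>\<gamma>. \<gamma> g \<partial>?L)"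
    using K unfolding K_Gdelta_def signed_radon_def by auto
  have fP: "finite_measure ?P" and fL: "finite_measure ?L" using rP rL by (simp_all add: radonD(2))
  obtain C where C: "AE x in \<mu>. RN_deriv \<mu> ?L x \<le> ennreal C"
    using bounded unfolding ess_bounded_def by blast
  define c where "c = max C 1"
  define r where "r x = enn2real (RN_deriv \<mu> ?L x)" for x
  have c: "1 \<le> c" by (simp add: c_def)
  have rm[measurable]: "r \<in> borel_measurable \<mu>" unfolding r_def by measurable
  have r0: "\<And>x. 0 \<le> r x" by (simp add: r_def)
  have RN_r: "AE x in \<mu>. RN_deriv \<mu> ?L x = ennreal (r x)"
    using C
  proof eventually_elim
    case (elim x)
    then have "RN_deriv \<mu> ?L x < top" using ennreal_less_top le_less_trans by blast
    then show ?case by (simp add: r_def)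
  qed
  have rc: "AE x in \<mu>. r x \<le> c"
    using C
  proof eventually_elim
    case (elim x)
    then have "RN_deriv \<mu> ?L x \<le> ennreal c" by (rule order_trans) (simp add: c_def ennreal_leI)
    then show ?case using c by (simp add: r_def enn2real_leI)
  qed
  interpret finite_measure \<mu> by (rule fin)
  have "?L = density \<mu> (RN_deriv \<mu> ?L)"
    using s by (simp add: density_RN_deriv[OF ac])
  also have "\<dots> = density \<mu> (\<lambda>x. ennreal (r x))"
    by (rule density_cong[OF _ _ RN_r]) simp_all
  finally have L: "?L = density \<mu> (\<lambda>x. ennreal (r x))" .
  have sP: "sets ?P = sets \<mu>" using s by simp
  let ?\<mu>' = "perturbed_measure \<mu> r c ?P"
  have int_perturbed: "integral\<^sup>L ?\<mu>' f = integral\<^sup>L \<mu> f - (1/c) *\<^sub>R integral\<^sup>L ?L f + (1/c) *\<^sub>R integral\<^sup>L ?P f"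
    if "f \<in> borel_measurable \<mu>" "\<And>x. x \<in> space \<mu> \<Longrightarrow> norm (f x) \<le> 1"
    for f :: "_ \<Rightarrow> 'b::{banach, second_countable_topology}"
    by (rule integral_perturbed_measure[OF fin fP fL sP L rm r0 rc c that])
  have "radon Gdelta_top ?\<mu>'"
    by (rule radon_dominated[OF r rP Hausdorff_space_Gdelta_top])
      (use s emeasure_perturbed_measure_le[OF sP rm r0 c] in auto)
  moreover have "(\<integral>\<gamma>. \<gamma> g \<partial>?\<mu>') = (\<integral>\<gamma>. \<gamma> g \<partial>\<mu>)" for g
  proof -
    have "(\<lambda>\<gamma>. \<gamma> g) \<in> borel_measurable \<mu>"
      using borel_measurable_eval_Gdelta s by (simp cong: measurable_cong_sets)
    moreover have "norm (\<gamma> g) \<le> 1" if "\<gamma> \<in> space \<mu>" for \<gamma>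
      using that norm_eval_Gdelta[of \<gamma> g] sets_eq_imp_space_eq[OF s] by simp
    ultimately show ?thesis using int_perturbed[of "\<lambda>\<gamma>. \<gamma> g"] int_eq[of g] by simp
  qed
  ultimately have "?\<mu>' = \<mu>" by (rule unique)
  then have "measure ?P A = measure ?L A"
    using int_perturbed[of "indicator A :: _ \<Rightarrow> real"] A s c
      sets.sets_into_space[OF A] by (simp add: Int_absorb2)
  then show ?thesis using signed_measure_eq_diff_variations[OF sm A fP fL] by simp
qed

theorem mainTheorem13:
  fixes \<phi> :: "'g::ab_group_add \<Rightarrow> quat"
    and \<mu> :: "('g \<Rightarrow> quat) measure"
  assumes phi: "\<phi> \<in> P_star_H"
    and mu_radon: "radon Gdelta_top \<mu>"
    and mu_repr: "\<forall>g. \<phi> g = (\<integral>\<gamma>. \<gamma> g \<partial>\<mu>)"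
  shows "(\<forall>\<mu>'. radon Gdelta_top \<mu>' \<and> (\<forall>g. \<phi> g = (\<integral>\<gamma>. \<gamma> g \<partial>\<mu>')) \<longrightarrow> \<mu>' = \<mu>)
     \<longleftrightarrow>
     (\<forall>\<nu>\<in>K_Gdelta. (\<exists>A\<in>sets (borel_of Gdelta_top). \<nu> A \<noteq> 0) \<longrightarrow>
        (\<forall>\<nu>1 \<nu>2. lebesgue_decomposition \<mu> (lower_variation (borel_of Gdelta_top) \<nu>) \<nu>1 \<nu>2 \<longrightarrow>
           (\<exists>A\<in>sets \<nu>2. emeasure \<nu>2 A \<noteq> 0) \<or>
           ((\<forall>A\<in>sets \<nu>2. emeasure \<nu>2 A = 0) \<and> \<not> ess_bounded \<mu> (RN_deriv \<mu> \<nu>1))))"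
proof (intro iffI ballI impI allI; (elim conjE)?)
  fix \<nu> \<nu>1 \<nu>2
  assume unique: "\<forall>\<mu>'. radon Gdelta_top \<mu>' \<and> (\<forall>g. \<phi> g = (\<integral>\<gamma>. \<gamma> g \<partial>\<mu>')) \<longrightarrow> \<mu>' = \<mu>"
    and K: "\<nu> \<in> K_Gdelta" and nonzero: "\<exists>A\<in>sets (borel_of Gdelta_top). \<nu> A \<noteq> 0"
    and dec: "lebesgue_decomposition \<mu> (lower_variation (borel_of Gdelta_top) \<nu>) \<nu>1 \<nu>2"
  have "\<not> ess_bounded \<mu> (RN_deriv \<mu> \<nu>1)" if "\<forall>A\<in>sets \<nu>2. emeasure \<nu>2 A = 0"
    using lebesgue_decomposition_singular_part_null[OF dec that] dec nonzero unique mu_repr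
      K_Gdelta_eq_0_if_bounded_density[OF mu_radon _ K]
    by (auto simp: lebesgue_decomposition_def)
  then show "(\<exists>A\<in>sets \<nu>2. emeasure \<nu>2 A \<noteq> 0) \<or>
      ((\<forall>A\<in>sets \<nu>2. emeasure \<nu>2 A = 0) \<and> \<not> ess_bounded \<mu> (RN_deriv \<mu> \<nu>1))" by blast
next
  fix \<mu>'
  assume criterion: "\<forall>\<nu>\<in>K_Gdelta. (\<exists>A\<in>sets (borel_of Gdelta_top). \<nu> A \<noteq> 0) \<longrightarrow>
        (\<forall>\<nu>1 \<nu>2. lebesgue_decomposition \<mu> (lower_variation (borel_of Gdelta_top) \<nu>) \<nu>1 \<nu>2 \<longrightarrow>
           (\<exists>A\<in>sets \<nu>2. emeasure \<nu>2 A \<noteq> 0) \<or>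
           ((\<forall>A\<in>sets \<nu>2. emeasure \<nu>2 A = 0) \<and> \<not> ess_bounded \<mu> (RN_deriv \<mu> \<nu>1)))"
    and r': "radon Gdelta_top \<mu>'" and repr': "\<forall>g. \<phi> g = (\<integral>\<gamma>. \<gamma> g \<partial>\<mu>')"
  let ?\<nu> = "\<lambda>A. measure \<mu>' A - measure \<mu> A"
  note radon = radonD(1,2)[OF mu_radon] radonD(1,2)[OF r']
  have "?\<nu> \<in> K_Gdelta" using mu_repr repr' by (intro measure_diff_in_K_Gdelta[OF mu_radon r']) simp
  then have "\<forall>A\<in>sets (borel_of Gdelta_top). ?\<nu> A = 0"
    using criterion radon lebesgue_decomposition_lower_variation_measure_diff[of \<mu>' \<mu>]
      ess_bounded_RN_deriv_lower_variation_measure_diff[of \<mu>' \<mu>] by fastforce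
  then show "\<mu>' = \<mu>" using radon by (intro finite_measure_eqI) simp_all
qed

end
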